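(* Suppose $n$ is even, $n_t=n_c=n/2$, and $W$ is the output of pair-switching rerandomization (PSRR) with threshold $a>0$ and tuning parameter $\gamma\ge 0$, assumed to terminate almost surely. Then for every $w\in\{0,1\}^n$ with $\sum_iw_i=n/2$, $P(W=w)=P(W=\mathbf 1-w)$; consequently $P(W_i=1)=P(W_i=0)=1/2$ for every $i$.
   Context: Covariates $X_1,\dots,X_n\in\mathbb R^p$ are fixed, with sample covariance matrix $S_{XX}=(n-1)^{-1}\sum_i(X_i-\overline X)(X_i-\overline X)^{\mathrm T}$ invertible, $\overline X=n^{-1}\sum_iX_i$. For an assignment $W\in\{0,1\}^n$ with $n_t$ ones, the Mahalanobis distance is $M(W)=n_t(1-n_t/n)(\overline X_t-\overline X_c)^{\mathrm T}S_{XX}^{-1}(\overline X_t-\overline X_c)$ with $\overline X_t=n_t^{-1}\sum_{i:W_i=1}X_i$, $\overline X_c=n_c^{-1}\sum_{i:W_i=0}X_i$. PSRR: draw $W^{(0)}$ uniformly among assignments with $n_t$ ones; set $t=0$, $M^{(0)}=M(W^{(0)})$. While $M^{(t)}>a$: choose uniformly at random one index $i$ with $W^{(t)}_i=1$ and one index $j$ with $W^{(t)}_j=0$, let $W^*$ be $W^{(t)}$ with entries $i,j$ swapped, $M^*=M(W^* )$; with probability $\min\{(M^{(t)}/M^* )^\gamma,1\}$ set $W^{(t+1)}=W^*$, $M^{(t+1)}=M^*$, $t\leftarrow t+1$ (otherwise keep the current state and try again). Output $W=W^{(t)}$ once $M^{(t)}\le a$. *)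

theory Defs
  imports "HOL-Probability.Probability"
begin

text \<open>Assignments W in {0,1}^n are represented by the set of treated units
  T = {i < n. W_i = 1}, a subset of {..<n}.\<close>

definition assignments :: "nat \<Rightarrow> nat \<Rightarrow> nat set set" where
  "assignments n nt = {T. T \<subseteq> {..<n} \<and> card T = nt}"

definition xbar :: "(nat \<Rightarrow> real^'p) \<Rightarrow> nat \<Rightarrow> real^'p" where
  "xbar X n = (1 / real n) *\<^sub>R (\<Sum>i<n. X i)"

definition sample_cov :: "(nat \<Rightarrow> real^'p) \<Rightarrow> nat \<Rightarrow> real^'p^'p" where
  "sample_cov X n = (\<chi> j k. (1 / (real n - 1)) *
      (\<Sum>i<n. (X i - xbar X n) $ j * (X i - xbar X n) $ k))"

definition mahalanobis :: "(nat \<Rightarrow> real^'p) \<Rightarrow> nat \<Rightarrow> nat \<Rightarrow> nat set \<Rightarrow> real" where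
  "mahalanobis X n nt T =
     (let Xt = (1 / real nt) *\<^sub>R (\<Sum>i\<in>T. X i);
          Xc = (1 / real (n - nt)) *\<^sub>R (\<Sum>i\<in>{..<n} - T. X i);
          d = Xt - Xc
      in real nt * (1 - real nt / real n) * (d \<bullet> (matrix_inv (sample_cov X n) *v d)))"

text \<open>Acceptance probability min{(M/M*)^\<gamma>, 1}; when M* = 0 the ratio is +\<infinity>
  (M > a > 0 in the loop), so the move is accepted with probability 1.\<close>
definition accept_prob :: "real \<Rightarrow> real \<Rightarrow> real \<Rightarrow> real" where
  "accept_prob \<gamma> M Ms = (if Ms = 0 then 1 else min ((M / Ms) powr \<gamma>) 1)"

definition psrr_step :: "(nat \<Rightarrow> real^'p) \<Rightarrow> nat \<Rightarrow> nat \<Rightarrow> real \<Rightarrow> nat set \<Rightarrow> nat set pmf" where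
  "psrr_step X n nt \<gamma> T =
     do { i \<leftarrow> pmf_of_set T;
          j \<leftarrow> pmf_of_set ({..<n} - T);
          let T' = insert j (T - {i});
          b \<leftarrow> bernoulli_pmf (accept_prob \<gamma> (mahalanobis X n nt T) (mahalanobis X n nt T'));
          return_pmf (if b then T' else T) }"

text \<open>Loop with the stopping rule: states with M \<le> a are absorbing.\<close>
definition psrr_kernel :: "(nat \<Rightarrow> real^'p) \<Rightarrow> nat \<Rightarrow> nat \<Rightarrow> real \<Rightarrow> real \<Rightarrow> nat set \<Rightarrow> nat set pmf" where
  "psrr_kernel X n nt a \<gamma> T =
     (if mahalanobis X n nt T \<le> a then return_pmf T else psrr_step X n nt \<gamma> T)"

definition psrr_state :: "(nat \<Rightarrow> real^'p) \<Rightarrow> nat \<Rightarrow> nat \<Rightarrow> real \<Rightarrow> real \<Rightarrow> nat \<Rightarrow> nat set pmf" where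
  "psrr_state X n nt a \<gamma> t =
     ((\<lambda>d. bind_pmf d (psrr_kernel X n nt a \<gamma>)) ^^ t) (pmf_of_set (assignments n nt))"

definition psrr_terminates :: "(nat \<Rightarrow> real^'p) \<Rightarrow> nat \<Rightarrow> nat \<Rightarrow> real \<Rightarrow> real \<Rightarrow> bool" where
  "psrr_terminates X n nt a \<gamma> \<longleftrightarrow>
     (\<lambda>t. measure_pmf.prob (psrr_state X n nt a \<gamma> t) {T. mahalanobis X n nt T \<le> a})
        \<longlonglongrightarrow> 1"

text \<open>P(W = w) for the output W: probability of having stopped at w.\<close>
definition psrr_out_prob :: "(nat \<Rightarrow> real^'p) \<Rightarrow> nat \<Rightarrow> nat \<Rightarrow> real \<Rightarrow> real \<Rightarrow> nat set \<Rightarrow> real" where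
  "psrr_out_prob X n nt a \<gamma> w =
     (if mahalanobis X n nt w \<le> a then lim (\<lambda>t. pmf (psrr_state X n nt a \<gamma> t) w) else 0)"

end

(* Complementation w \<mapsto> {..<n} - w maps assignments with nt treated units to those with
   n - nt treated units and preserves the Mahalanobis distance, since the difference of group
   means only changes sign. It therefore conjugates one PSRR iteration for nt into the iteration
   for n - nt (the proposed treated and control units trade roles), so it transports the law of
   every iterate and hence the output probabilities; for nt = n/2 this is a symmetry.
   Termination makes the output probabilities sum to 1, and complementation pairs the
   assignments treating unit i with those that do not, so each half has probability 1/2. *)

theory Submission
  imports Defs
begin

lemma mahalanobis_complement:
  assumes "nt \<le> n" "T \<subseteq> {..<n}"
  shows "mahalanobis X n (n - nt) ({..<n} - T) = mahalanobis X n nt T"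
proof -
  have double_diff: "{..<n} - ({..<n} - T) = T" using assms(2) by auto
  have weight: "real (n - nt) * (1 - real (n - nt) / real n) = real nt * (1 - real nt / real n)"
    using assms(1) by (cases "n = 0") (auto simp: of_nat_diff field_simps)
  have quadratic_form_neg: "\<And>(A::real^'a^'a) d. (- d) \<bullet> (A *v (- d)) = d \<bullet> (A *v d)"
    by (simp add: vec.neg)
  show ?thesis
    unfolding mahalanobis_def Let_def double_diff weight diff_diff_cancel[OF assms(1)]
    by (metis minus_diff_eq quadratic_form_neg)
qed

lemma finite_assignments: "finite (assignments n k)"
  by (rule finite_subset[of _ "Pow {..<n}"]) (auto simp: assignments_def)

lemma assignments_nonempty: "k \<le> n \<Longrightarrow> assignments n k \<noteq> {}"
  using card_lessThan[of k] by (auto simp: assignments_def intro!: exI[of _ "{..<k}"])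

lemma complement_in_assignments:
  "T \<in> assignments n k \<Longrightarrow> {..<n} - T \<in> assignments n (n - k)"
  by (auto simp: assignments_def card_Diff_subset finite_subset)

lemma complement_image_assignments:
  assumes "k \<le> n"
  shows "(-) {..<n} ` assignments n k = assignments n (n - k)"
proof
  show "(-) {..<n} ` assignments n k \<subseteq> assignments n (n - k)"
    using complement_in_assignments by blast
  show "assignments n (n - k) \<subseteq> (-) {..<n} ` assignments n k"
  proof
    fix S assume "S \<in> assignments n (n - k)"
    then have "{..<n} - S \<in> assignments n k" "S = {..<n} - ({..<n} - S)"
      using complement_in_assignments[of S n "n - k"] assms by (auto simp: assignments_def)
    then show "S \<in> (-) {..<n} ` assignments n k" by blast
  qed
qed

lemma inj_on_complement_assignments: "inj_on ((-) {..<n}) (assignments n k)"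
  by (rule inj_onI) (auto simp: assignments_def)

lemma swap_in_assignments:
  assumes "T \<in> assignments n k" "i \<in> T" "j \<in> {..<n} - T"
  shows "insert j (T - {i}) \<in> assignments n k"
proof -
  have "finite T" "card T > 0"
    using assms finite_subset[of T "{..<n}"] by (auto simp: assignments_def card_gt_0_iff)
  then show ?thesis
    using assms by (auto simp: assignments_def card_insert_if card_Diff_singleton_if)
qed

lemma set_psrr_kernel:
  assumes "T \<in> assignments n nt" "0 < nt" "nt < n"
  shows "set_pmf (psrr_kernel X n nt a \<gamma> T) \<subseteq> assignments n nt"
proof -
  have "T \<noteq> {}" "{..<n} - T \<noteq> {}" "finite T"
    using assms complement_in_assignments[OF assms(1)] finite_subset[of T "{..<n}"]
    by (auto simp: assignments_def)
  then show ?thesis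
    using assms(1) swap_in_assignments[OF assms(1)]
    by (auto simp: psrr_kernel_def psrr_step_def Let_def split: if_split_asm)
qed

lemma psrr_state_Suc:
  "psrr_state X n nt a \<gamma> (Suc t) = bind_pmf (psrr_state X n nt a \<gamma> t) (psrr_kernel X n nt a \<gamma>)"
  by (simp add: psrr_state_def)

lemma set_psrr_state:
  assumes "0 < nt" "nt < n"
  shows "set_pmf (psrr_state X n nt a \<gamma> t) \<subseteq> assignments n nt"
proof (induction t)
  case 0
  show ?case
    using finite_assignments assignments_nonempty assms by (simp add: psrr_state_def)
next
  case (Suc t)
  then show ?case
    using set_psrr_kernel[OF _ assms] by (fastforce simp: psrr_state_Suc)
qed

text \<open>On the complement the proposed treated unit i and control unit j trade roles, so the
  proof amounts to commuting the two uniform draws.\<close>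
lemma psrr_step_complement:
  assumes T: "T \<in> assignments n nt" and "0 < nt" "nt < n"
  shows "psrr_step X n (n - nt) \<gamma> ({..<n} - T) = map_pmf ((-) {..<n}) (psrr_step X n nt \<gamma> T)"
proof -
  let ?C = "{..<n} - T"
  let ?M = "mahalanobis X n nt" and ?M' = "mahalanobis X n (n - nt)"
  let ?move = "\<lambda>T' T. bernoulli_pmf (accept_prob \<gamma> (?M T) (?M T')) \<bind>
                 (\<lambda>b. return_pmf (if b then T' else T))"
  let ?move' = "\<lambda>T' T. bernoulli_pmf (accept_prob \<gamma> (?M' T) (?M' T')) \<bind>
                 (\<lambda>b. return_pmf (if b then T' else T))"
  have sub: "T \<subseteq> {..<n}" "finite T" using T finite_subset by (auto simp: assignments_def)
  then have double_diff: "{..<n} - ?C = T" by auto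
  have nonempty: "T \<noteq> {}" "?C \<noteq> {}"
    using assms complement_in_assignments[OF T] by (auto simp: assignments_def)
  have swapped_move: "?move' (insert i (?C - {j})) ?C
      = map_pmf ((-) {..<n}) (?move (insert j (T - {i})) T)"
    if "j \<in> ?C" "i \<in> T" for i j
  proof -
    have swap: "insert i (?C - {j}) = {..<n} - insert j (T - {i})" using that sub by auto
    have "insert j (T - {i}) \<subseteq> {..<n}" using that sub by auto
    then have "?M' ({..<n} - insert j (T - {i})) = ?M (insert j (T - {i}))" "?M' ?C = ?M T"
      using mahalanobis_complement[of nt n _ X] sub assms(3) by simp_all
    then show ?thesis
      unfolding swap map_bind_pmf by (auto intro!: bind_pmf_cong)
  qed
  have "map_pmf ((-) {..<n}) (psrr_step X n nt \<gamma> T)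
      = pmf_of_set T \<bind> (\<lambda>i. pmf_of_set ?C \<bind>
          (\<lambda>j. map_pmf ((-) {..<n}) (?move (insert j (T - {i})) T)))"
    unfolding psrr_step_def map_bind_pmf Let_def ..
  also have "\<dots> = pmf_of_set ?C \<bind> (\<lambda>j. pmf_of_set T \<bind>
          (\<lambda>i. map_pmf ((-) {..<n}) (?move (insert j (T - {i})) T)))"
    by (rule bind_commute_pmf)
  also have "\<dots> = psrr_step X n (n - nt) \<gamma> ?C"
    unfolding psrr_step_def Let_def double_diff
  proof (rule bind_pmf_cong[OF refl], rule bind_pmf_cong[OF refl])
    fix j i assume "j \<in> set_pmf (pmf_of_set ?C)" "i \<in> set_pmf (pmf_of_set T)"
    then show "map_pmf ((-) {..<n}) (?move (insert j (T - {i})) T) = ?move' (insert i (?C - {j})) ?C"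
      using nonempty sub swapped_move[of j i] by simp
  qed
  finally show ?thesis by simp
qed

lemma psrr_kernel_complement:
  assumes T: "T \<in> assignments n nt" and "0 < nt" "nt < n"
  shows "psrr_kernel X n (n - nt) a \<gamma> ({..<n} - T) = map_pmf ((-) {..<n}) (psrr_kernel X n nt a \<gamma> T)"
proof -
  have "mahalanobis X n (n - nt) ({..<n} - T) = mahalanobis X n nt T"
    using T assms(3) by (simp add: mahalanobis_complement assignments_def)
  then show ?thesis
    unfolding psrr_kernel_def psrr_step_complement[OF assms] by simp
qed

lemma psrr_state_complement:
  assumes "0 < nt" "nt < n"
  shows "map_pmf ((-) {..<n}) (psrr_state X n nt a \<gamma> t) = psrr_state X n (n - nt) a \<gamma> t"
proof (induction t)
  case 0
  have "nt \<le> n" using assms by simp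
  then show ?case
    unfolding psrr_state_def funpow_0
    by (simp add: map_pmf_of_set_inj inj_on_complement_assignments assignments_nonempty
      finite_assignments complement_image_assignments)
next
  case (Suc t)
  let ?S = "psrr_state X n nt a \<gamma> t"
  have "map_pmf ((-) {..<n}) (bind_pmf ?S (psrr_kernel X n nt a \<gamma>))
      = bind_pmf ?S (\<lambda>T. psrr_kernel X n (n - nt) a \<gamma> ({..<n} - T))"
    unfolding map_bind_pmf
  proof (rule bind_pmf_cong[OF refl])
    fix T assume "T \<in> set_pmf ?S"
    then show "map_pmf ((-) {..<n}) (psrr_kernel X n nt a \<gamma> T) = psrr_kernel X n (n - nt) a \<gamma> ({..<n} - T)"
      using set_psrr_state[OF assms] psrr_kernel_complement[OF _ assms] by (metis subsetD)
  qed
  also have "\<dots> = bind_pmf (psrr_state X n (n - nt) a \<gamma> t) (psrr_kernel X n (n - nt) a \<gamma>)"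
    by (simp add: bind_map_pmf flip: Suc.IH)
  finally show ?case by (simp add: psrr_state_Suc)
qed

lemma pmf_map_inj_on:
  assumes "inj_on f A" "set_pmf M \<subseteq> A" "x \<in> A"
  shows "pmf (map_pmf f M) (f x) = pmf M x"
proof (cases "x \<in> set_pmf M")
  case True
  then show ?thesis by (rule pmf_map_inj[OF inj_on_subset[OF assms(1,2)]])
next
  case False
  then have "f x \<notin> f ` set_pmf M"
    using inj_on_image_mem_iff[OF assms(1,3,2)] by blast
  then show ?thesis
    using False by (metis pmf_eq_0_set_pmf set_map_pmf)
qed

lemma psrr_out_prob_complement:
  assumes w: "w \<in> assignments n nt" and "0 < nt" "nt < n"
  shows "psrr_out_prob X n (n - nt) a \<gamma> ({..<n} - w) = psrr_out_prob X n nt a \<gamma> w"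
proof -
  have "pmf (psrr_state X n (n - nt) a \<gamma> t) ({..<n} - w) = pmf (psrr_state X n nt a \<gamma> t) w" for t
    unfolding psrr_state_complement[OF assms(2,3), symmetric]
    by (rule pmf_map_inj_on[OF inj_on_complement_assignments set_psrr_state[OF assms(2,3)] w])
  moreover have "mahalanobis X n (n - nt) ({..<n} - w) = mahalanobis X n nt w"
    using w assms(3) by (simp add: mahalanobis_complement assignments_def)
  ultimately show ?thesis
    unfolding psrr_out_prob_def by simp
qed

lemma pmf_bind_ge: "pmf M x * pmf (K x) y \<le> pmf (bind_pmf M K) y"
proof -
  have "ennreal (pmf M x * pmf (K x) y) = (\<integral>\<^sup>+z. ennreal (pmf (K x) y) * indicator {x} z \<partial>measure_pmf M)"
    by (simp add: nn_integral_cmult_indicator emeasure_pmf_single ennreal_mult' mult.commute)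
  also have "\<dots> \<le> (\<integral>\<^sup>+z. ennreal (pmf (K z) y) \<partial>measure_pmf M)"
    by (intro nn_integral_mono) (simp split: split_indicator)
  also have "\<dots> = ennreal (pmf (bind_pmf M K) y)"
    by (simp add: ennreal_pmf_bind)
  finally show ?thesis by simp
qed

lemma psrr_state_tendsto_out_prob:
  assumes "mahalanobis X n nt w \<le> a"
  shows "(\<lambda>t. pmf (psrr_state X n nt a \<gamma> t) w) \<longlonglongrightarrow> psrr_out_prob X n nt a \<gamma> w"
proof -
  have "incseq (\<lambda>t. pmf (psrr_state X n nt a \<gamma> t) w)"
  proof (rule incseq_SucI)
    fix t
    show "pmf (psrr_state X n nt a \<gamma> t) w \<le> pmf (psrr_state X n nt a \<gamma> (Suc t)) w"
      using pmf_bind_ge[of "psrr_state X n nt a \<gamma> t" w "psrr_kernel X n nt a \<gamma>" w] assms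
      by (simp add: psrr_state_Suc psrr_kernel_def)
  qed
  then have "convergent (\<lambda>t. pmf (psrr_state X n nt a \<gamma> t) w)"
    using incseq_convergent pmf_le_1 unfolding convergent_def by metis
  then show ?thesis
    using assms by (simp add: psrr_out_prob_def convergent_LIMSEQ_iff)
qed

lemma sum_psrr_out_prob:
  assumes "0 < nt" "nt < n" and "psrr_terminates X n nt a \<gamma>"
  shows "(\<Sum>w\<in>assignments n nt. psrr_out_prob X n nt a \<gamma> w) = 1"
proof (rule LIMSEQ_unique)
  let ?A = "assignments n nt" and ?M = "mahalanobis X n nt"
  let ?S = "psrr_state X n nt a \<gamma>"
  show "(\<lambda>t. \<Sum>w\<in>?A. if ?M w \<le> a then pmf (?S t) w else 0)
      \<longlonglongrightarrow> (\<Sum>w\<in>?A. psrr_out_prob X n nt a \<gamma> w)"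
  proof (intro tendsto_sum)
    fix w
    show "(\<lambda>t. if ?M w \<le> a then pmf (?S t) w else 0) \<longlonglongrightarrow> psrr_out_prob X n nt a \<gamma> w"
      by (cases "?M w \<le> a") (simp add: psrr_state_tendsto_out_prob, simp add: psrr_out_prob_def)
  qed
  have "(\<Sum>w\<in>?A. if ?M w \<le> a then pmf (?S t) w else 0) = measure_pmf.prob (?S t) {T. ?M T \<le> a}" for t
  proof -
    have "(\<Sum>w\<in>?A. if ?M w \<le> a then pmf (?S t) w else 0) = measure_pmf.prob (?S t) {w\<in>?A. ?M w \<le> a}"
      using finite_assignments by (simp add: sum.inter_filter measure_measure_pmf_finite)
    also have "\<dots> = measure_pmf.prob (?S t) {T. ?M T \<le> a}"
      using set_psrr_state[OF assms(1,2), of X a \<gamma> t]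
      by (intro measure_pmf.finite_measure_eq_AE) (auto simp: AE_measure_pmf_iff)
    finally show ?thesis .
  qed
  then show "(\<lambda>t. \<Sum>w\<in>?A. if ?M w \<le> a then pmf (?S t) w else 0) \<longlonglongrightarrow> 1"
    using assms(3) by (simp add: psrr_terminates_def)
qed

lemma sum_assignments_half:
  assumes "even n" "i < n"
    and symmetric: "\<And>w. w \<in> assignments n (n div 2) \<Longrightarrow> f ({..<n} - w) = f w"
    and total: "(\<Sum>w\<in>assignments n (n div 2). f w) = (1::real)"
  shows "(\<Sum>w\<in>{w\<in>assignments n (n div 2). i \<in> w}. f w) = 1 / 2"
    and "(\<Sum>w\<in>{w\<in>assignments n (n div 2). i \<notin> w}. f w) = 1 / 2"
proof -
  let ?A = "assignments n (n div 2)"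
  have "n - n div 2 = n div 2" using assms(1) by auto
  then have complement: "w \<in> ?A \<Longrightarrow> {..<n} - w \<in> ?A" for w
    using complement_in_assignments[of w n "n div 2"] by simp
  have "(\<Sum>w\<in>{w\<in>?A. i \<in> w}. f w) = (\<Sum>w\<in>{w\<in>?A. i \<notin> w}. f w)"
    by (rule sum.reindex_bij_witness[of _ "(-) {..<n}" "(-) {..<n}"])
       (use complement symmetric assms(2) in \<open>auto simp: assignments_def\<close>)
  moreover have "(\<Sum>w\<in>{w\<in>?A. i \<in> w}. f w) + (\<Sum>w\<in>{w\<in>?A. i \<notin> w}. f w) = 1"
  proof -
    have "1 = sum f (?A \<inter> {w. i \<in> w}) + sum f (?A - {w. i \<in> w})"
      using total sum.Int_Diff[OF finite_assignments, of f n "n div 2" "{w. i \<in> w}"] by linarith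
    also have "?A \<inter> {w. i \<in> w} = {w\<in>?A. i \<in> w}" by blast
    also have "?A - {w. i \<in> w} = {w\<in>?A. i \<notin> w}" by blast
    finally show ?thesis by simp
  qed
  ultimately show "(\<Sum>w\<in>{w\<in>?A. i \<in> w}. f w) = 1 / 2" "(\<Sum>w\<in>{w\<in>?A. i \<notin> w}. f w) = 1 / 2"
    by simp_all
qed

text \<open>Only evenness and termination are used: the symmetry holds for every threshold,
  every tuning parameter, and even when matrix_inv is applied to a singular matrix.\<close>
theorem mainTheorem3:
  fixes X :: "nat \<Rightarrow> real^'p" and n :: nat and a \<gamma> :: real
  assumes "even n"
    and "invertible (sample_cov X n)"
    and "a > 0" and "\<gamma> \<ge> 0"
    and "psrr_terminates X n (n div 2) a \<gamma>"
  shows "(\<forall>w \<in> assignments n (n div 2).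
            psrr_out_prob X n (n div 2) a \<gamma> w
              = psrr_out_prob X n (n div 2) a \<gamma> ({..<n} - w))
       \<and> (\<forall>i<n. (\<Sum>w\<in>{w \<in> assignments n (n div 2). i \<in> w}. psrr_out_prob X n (n div 2) a \<gamma> w) = 1 / 2
              \<and> (\<Sum>w\<in>{w \<in> assignments n (n div 2). i \<notin> w}. psrr_out_prob X n (n div 2) a \<gamma> w) = 1 / 2)"
proof (cases "n = 0")
  case True
  then show ?thesis by (simp add: assignments_def)
next
  case False
  let ?P = "psrr_out_prob X n (n div 2) a \<gamma>"
  have half: "0 < n div 2" "n div 2 < n" "n - n div 2 = n div 2"
    using False assms(1) by auto
  have symmetric: "?P ({..<n} - w) = ?P w" if "w \<in> assignments n (n div 2)" for w
    using psrr_out_prob_complement[OF that half(1,2)] by (simp only: half(3))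
  have total: "(\<Sum>w\<in>assignments n (n div 2). ?P w) = 1"
    by (rule sum_psrr_out_prob[OF half(1,2) assms(5)])
  show ?thesis
    using symmetric sum_assignments_half[OF assms(1) _ symmetric total] by auto
qed

end
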